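(* Let $\{e_k:k\in\mathbb N\}$ be an orthonormal basis of $X$, and for every $k\in\mathbb N$ let $\mu_k$ be a real valued Borel measure on $X$ such that, setting $M_n(B):=\sum_{k=1}^n\mu_k(B)e_k$ for $n\in\mathbb N$ and Borel $B\subset X$, we have $\sup_{n\in\mathbb N}|M_n|(X)=:C<+\infty$. Then there exists $M\in\mathcal M(X,X)$ with $|M|(X)\le C$ and $\langle M(B),e_k\rangle=\mu_k(B)$ for all $k\in\mathbb N$ and Borel $B$; in particular $M(B)=\sum_{k=1}^\infty\mu_k(B)e_k$ for every Borel set $B$.
   Context: $X$ is a separable real Hilbert space. $\mathcal M(X,X)$ is the space of countably additive $X$-valued Borel measures $m$ on $X$ with finite total variation, where for an $X$-valued Borel measure $m$, $|m|(B):=\sup\sum_n\|m(B_n)\|$, the supremum over all at most countable partitions of $B$ into pairwise disjoint Borel sets. *)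

theory Defs
  imports "HOL-Analysis.Analysis"
begin

definition borel_vector_measure :: "('a::topological_space set \<Rightarrow> 'b::real_normed_vector) \<Rightarrow> bool" where
  "borel_vector_measure m \<longleftrightarrow>
     (\<forall>B :: nat \<Rightarrow> 'a set. range B \<subseteq> sets borel \<longrightarrow> disjoint_family B \<longrightarrow>
        (\<lambda>n. m (B n)) sums m (\<Union>n. B n))"

text \<open>Total variation: supremum over (at most) countable Borel partitions of A
(finite partitions are included by padding with empty sets).\<close>
definition total_variation :: "('a::topological_space set \<Rightarrow> 'b::real_normed_vector) \<Rightarrow> 'a set \<Rightarrow> ennreal" where
  "total_variation m A =
     (SUP B \<in> {B :: nat \<Rightarrow> 'a set. range B \<subseteq> sets borel \<and> disjoint_family B \<and> (\<Union>n. B n) = A}.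
        (\<Sum>n. ennreal (norm (m (B n)))))"

definition orthonormal_basis :: "(nat \<Rightarrow> 'a::real_inner) \<Rightarrow> bool" where
  "orthonormal_basis e \<longleftrightarrow>
     (\<forall>i j. e i \<bullet> e j = (if i = j then 1 else 0)) \<and> closure (span (range e)) = UNIV"

end

theory Submission imports Defs begin

text \<open>By Pythagoras, \<open>\<Sum>k<n. \<mu>\<^sub>k(B)\<^sup>2 = \<parallel>M\<^sub>n(B)\<parallel>\<^sup>2 \<le> C\<^sup>2\<close>, so the series \<open>\<Sum>\<^sub>k \<mu>\<^sub>k(B) e\<^sub>k\<close> converges
  to some \<open>M(B)\<close>. Total variation is lower semicontinuous under setwise convergence, hence
  \<open>|M|(X) \<le> C\<close>. Finite total variation makes \<open>\<Sum>\<^sub>j M(B\<^sub>j)\<close> absolutely convergent for a disjoint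
  Borel family, and by countable additivity of each \<open>\<mu>\<^sub>k\<close> its coordinates agree with those of
  \<open>M(\<Union>\<^sub>j B\<^sub>j)\<close>; since the basis is total, \<open>M\<close> is countably additive.\<close>

lemma sum_norm_le_total_variation:
  fixes m :: "'a::topological_space set \<Rightarrow> 'b::real_normed_vector"
    and B :: "nat \<Rightarrow> 'a set"
  assumes B: "\<And>j. B j \<in> sets borel" and disj: "disjoint_family B"
  shows "ennreal (\<Sum>j<J. norm (m (B j))) \<le> total_variation m UNIV"
proof -
  define P where "P i = (if i < J then B i else if i = J then - (\<Union>j<J. B j) else {})" for i
  have "- (\<Union>j<J. B j) \<in> sets borel"
    using B by (intro borel_comp) auto
  then have "P i \<in> sets borel" for i
    unfolding P_def using B by (simp split: if_split)
  moreover have "disjoint_family P"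
    using disj unfolding disjoint_family_on_def P_def by auto
  moreover have "(\<Union>i. P i) = UNIV"
  proof -
    have "x \<in> P J \<or> (\<exists>j<J. x \<in> P j)" for x
      by (auto simp: P_def)
    then show ?thesis
      by blast
  qed
  ultimately have partition: "P \<in> {P. range P \<subseteq> sets borel \<and> disjoint_family P \<and> (\<Union>i. P i) = UNIV}"
    by auto
  have "ennreal (\<Sum>j<J. norm (m (B j))) = (\<Sum>j<J. ennreal (norm (m (P j))))"
    by (simp add: P_def)
  also have "\<dots> \<le> (\<Sum>i. ennreal (norm (m (P i))))"
    by (rule sum_le_suminf) auto
  also have "\<dots> \<le> total_variation m UNIV"
    unfolding total_variation_def using partition by (rule SUP_upper)
  finally show ?thesis .
qed

lemma norm_le_total_variation:
  fixes m :: "'a::topological_space set \<Rightarrow> 'b::real_normed_vector"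
  assumes "B \<in> sets borel"
  shows "ennreal (norm (m B)) \<le> total_variation m UNIV"
proof -
  have "ennreal (\<Sum>j<Suc 0. norm (m (if j = 0 then B else {}))) \<le> total_variation m UNIV"
    by (rule sum_norm_le_total_variation) (use assms in \<open>auto simp: disjoint_family_on_def\<close>)
  then show ?thesis
    by simp
qed

lemma le_enn2real_if_ennreal_le:
  assumes "ennreal x \<le> y" and "y < \<infinity>" and "0 \<le> x"
  shows "x \<le> enn2real y"
  using enn2real_mono[OF assms(1)] assms(2,3) by simp

lemma summable_norm_if_total_variation_finite:
  fixes m :: "'a::topological_space set \<Rightarrow> 'b::real_normed_vector"
  assumes tv: "total_variation m UNIV < \<infinity>"
    and B: "\<And>j. B j \<in> sets borel" and disj: "disjoint_family B"
  shows "summable (\<lambda>j. norm (m (B j)))"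
proof (rule summableI_nonneg_bounded)
  fix J
  have "ennreal (\<Sum>j<J. norm (m (B j))) \<le> total_variation m UNIV"
    using B disj by (rule sum_norm_le_total_variation)
  then show "(\<Sum>j<J. norm (m (B j))) \<le> enn2real (total_variation m UNIV)"
    using tv by (rule le_enn2real_if_ennreal_le) (simp add: sum_nonneg)
qed simp

lemma total_variation_le_if_tendsto:
  fixes m :: "nat \<Rightarrow> 'a::topological_space set \<Rightarrow> 'b::real_normed_vector"
  assumes lim: "\<And>B. B \<in> sets borel \<Longrightarrow> (\<lambda>n. m n B) \<longlonglongrightarrow> M B"
    and bound: "\<And>n. total_variation (m n) A \<le> C"
  shows "total_variation M A \<le> C"
  unfolding total_variation_def
proof (rule SUP_least)
  fix B :: "nat \<Rightarrow> 'a set"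
  assume "B \<in> {B. range B \<subseteq> sets borel \<and> disjoint_family B \<and> (\<Union>n. B n) = A}"
  then have B: "\<And>j. B j \<in> sets borel" and part: "B \<in> {B. range B \<subseteq> sets borel \<and> disjoint_family B \<and> (\<Union>n. B n) = A}"
    by auto
  show "(\<Sum>j. ennreal (norm (M (B j)))) \<le> C"
  proof (rule suminf_le_const)
    fix J
    have "(\<lambda>n. \<Sum>j<J. ennreal (norm (m n (B j)))) \<longlonglongrightarrow> (\<Sum>j<J. ennreal (norm (M (B j))))"
      by (intro tendsto_sum tendsto_ennrealI tendsto_norm lim B)
    moreover have "(\<Sum>j<J. ennreal (norm (m n (B j)))) \<le> C" for n
    proof -
      have "(\<Sum>j<J. ennreal (norm (m n (B j)))) \<le> (\<Sum>j. ennreal (norm (m n (B j))))"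
        by (rule sum_le_suminf) auto
      also have "\<dots> \<le> total_variation (m n) A"
        unfolding total_variation_def using part by (rule SUP_upper)
      finally show ?thesis
        using bound by (rule order_trans)
    qed
    ultimately show "(\<Sum>j<J. ennreal (norm (M (B j)))) \<le> C"
      by (intro LIMSEQ_le_const2) auto
  qed simp
qed

text \<open>The library's Cauchy criterion is stated for the class \<open>banach\<close>, which a type variable of
  sort \<open>{real_inner, complete_space}\<close> does not belong to.\<close>

lemma summableI_Cauchy_complete:
  fixes f :: "nat \<Rightarrow> 'a::{real_normed_vector, complete_space}"
  assumes tails: "\<And>\<epsilon>. \<epsilon> > 0 \<Longrightarrow> \<exists>N. \<forall>m\<ge>N. \<forall>n. norm (sum f {m..<n}) < \<epsilon>"
  shows "summable f"
  unfolding summable_iff_convergent Cauchy_convergent_iff [symmetric] Cauchy_iff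
proof clarify
  fix \<epsilon> :: real
  assume "0 < \<epsilon>"
  with tails obtain N where N: "\<And>m n. m \<ge> N \<Longrightarrow> norm (sum f {m..<n}) < \<epsilon>"
    by blast
  have "norm (sum f {..<m} - sum f {..<n}) < \<epsilon>" if "m \<ge> N" "n \<ge> N" for m n
  proof (cases m n rule: le_cases)
    case le
    then show ?thesis
      by (metis N finite_lessThan lessThan_minus_lessThan lessThan_subset_iff norm_minus_commute sum_diff \<open>m \<ge> N\<close>)
  next
    case ge
    then show ?thesis
      by (metis N finite_lessThan lessThan_minus_lessThan lessThan_subset_iff sum_diff \<open>n \<ge> N\<close>)
  qed
  then show "\<exists>N. \<forall>m\<ge>N. \<forall>n\<ge>N. norm (sum f {..<m} - sum f {..<n}) < \<epsilon>"
    by blast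
qed

lemma summable_norm_cancel_complete:
  fixes f :: "nat \<Rightarrow> 'a::{real_normed_vector, complete_space}"
  assumes "summable (\<lambda>n. norm (f n))"
  shows "summable f"
proof (rule summableI_Cauchy_complete)
  fix \<epsilon> :: real assume "\<epsilon> > 0"
  with assms obtain N where N: "\<And>m n. m \<ge> N \<Longrightarrow> norm (\<Sum>k\<in>{m..<n}. norm (f k)) < \<epsilon>"
    unfolding summable_Cauchy by blast
  have "norm (sum f {m..<n}) < \<epsilon>" if "m \<ge> N" for m n
    using norm_sum[of f "{m..<n}"] N[OF that, of n] by simp
  then show "\<exists>N. \<forall>m\<ge>N. \<forall>n. norm (sum f {m..<n}) < \<epsilon>"
    by blast
qed

lemma norm_sum_orthonormal_squared:
  fixes e :: "nat \<Rightarrow> 'a::real_inner"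
  assumes orth: "\<And>i j. e i \<bullet> e j = (if i = j then 1 else 0)" and "finite F"
  shows "(norm (\<Sum>k\<in>F. a k *\<^sub>R e k))\<^sup>2 = (\<Sum>k\<in>F. (a k)\<^sup>2)"
proof -
  have "pairwise (\<lambda>i j. orthogonal (a i *\<^sub>R e i) (a j *\<^sub>R e j)) F"
    by (simp add: pairwise_def orthogonal_def orth)
  then have "(norm (\<Sum>k\<in>F. a k *\<^sub>R e k))\<^sup>2 = (\<Sum>k\<in>F. (norm (a k *\<^sub>R e k))\<^sup>2)"
    by (rule norm_sum_Pythagorean[OF \<open>finite F\<close>])
  moreover have "norm (e k) = 1" for k
    using orth[of k k] by (simp add: norm_eq_sqrt_inner)
  ultimately show ?thesis
    by (simp add: power_mult_distrib)
qed

lemma summable_orthonormal_if_square_summable: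
  fixes e :: "nat \<Rightarrow> 'a::{real_inner, complete_space}"
  assumes orth: "\<And>i j. e i \<bullet> e j = (if i = j then 1 else 0)"
    and sq: "summable (\<lambda>k. (a k)\<^sup>2)"
  shows "summable (\<lambda>k. a k *\<^sub>R e k)"
proof (rule summableI_Cauchy_complete)
  fix \<epsilon> :: real assume "\<epsilon> > 0"
  then have "\<epsilon>\<^sup>2 > 0" by simp
  with sq obtain N where N: "\<And>m n. m \<ge> N \<Longrightarrow> norm (\<Sum>k\<in>{m..<n}. (a k)\<^sup>2) < \<epsilon>\<^sup>2"
    unfolding summable_Cauchy by blast
  have "norm (\<Sum>k\<in>{m..<n}. a k *\<^sub>R e k) < \<epsilon>" if "m \<ge> N" for m n
  proof (rule power2_less_imp_less)
    have "(norm (\<Sum>k\<in>{m..<n}. a k *\<^sub>R e k))\<^sup>2 = (\<Sum>k\<in>{m..<n}. (a k)\<^sup>2)"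
      by (simp add: norm_sum_orthonormal_squared orth)
    also have "\<dots> < \<epsilon>\<^sup>2"
      using N[OF that, of n] by simp
    finally show "(norm (\<Sum>k\<in>{m..<n}. a k *\<^sub>R e k))\<^sup>2 < \<epsilon>\<^sup>2" .
  qed (use \<open>\<epsilon> > 0\<close> in simp)
  then show "\<exists>N. \<forall>m\<ge>N. \<forall>n. norm (\<Sum>k\<in>{m..<n}. a k *\<^sub>R e k) < \<epsilon>"
    by blast
qed

lemma summable_orthonormal_if_bounded:
  fixes e :: "nat \<Rightarrow> 'a::{real_inner, complete_space}"
  assumes orth: "\<And>i j. e i \<bullet> e j = (if i = j then 1 else 0)"
    and bound: "\<And>n. norm (\<Sum>k<n. a k *\<^sub>R e k) \<le> c"
  shows "summable (\<lambda>k. a k *\<^sub>R e k)"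
proof (rule summable_orthonormal_if_square_summable[OF orth summableI_nonneg_bounded])
  fix n
  have "(\<Sum>k<n. (a k)\<^sup>2) = (norm (\<Sum>k<n. a k *\<^sub>R e k))\<^sup>2"
    by (simp add: norm_sum_orthonormal_squared orth)
  also have "\<dots> \<le> c\<^sup>2"
    by (rule power_mono[OF bound norm_ge_zero])
  finally show "(\<Sum>k<n. (a k)\<^sup>2) \<le> c\<^sup>2" .
qed simp

lemma inner_suminf_orthonormal:
  fixes e :: "nat \<Rightarrow> 'a::real_inner"
  assumes orth: "\<And>i j. e i \<bullet> e j = (if i = j then 1 else 0)"
    and "summable (\<lambda>k. a k *\<^sub>R e k)"
  shows "(\<Sum>k. a k *\<^sub>R e k) \<bullet> e j = a j"
proof -
  have "(\<lambda>k. (a k *\<^sub>R e k) \<bullet> e j) sums ((\<Sum>k. a k *\<^sub>R e k) \<bullet> e j)"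
    using bounded_linear.sums[OF bounded_linear_inner_left summable_sums[OF assms(2)]] .
  moreover have "(\<lambda>k. (a k *\<^sub>R e k) \<bullet> e j) = (\<lambda>k. if k = j then a k else 0)"
    by (simp add: orth fun_eq_iff)
  ultimately show ?thesis
    using sums_single[of j a] by (simp add: sums_unique2)
qed

lemma eq_0_if_orthogonal_to_total:
  fixes e :: "nat \<Rightarrow> 'a::real_inner"
  assumes total: "closure (span (range e)) = UNIV" and orth: "\<And>k. x \<bullet> e k = 0"
  shows "x = 0"
proof -
  have "span (range e) \<subseteq> {y. x \<bullet> y = 0}"
    by (rule span_minimal) (use orth subspace_hyperplane in auto)
  then have "closure (span (range e)) \<subseteq> {y. x \<bullet> y = 0}"
    by (rule closure_minimal) (rule closed_hyperplane)
  then have "x \<bullet> x = 0"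
    using total by blast
  then show ?thesis
    by simp
qed

lemma borel_vector_measure_if_coordinates:
  fixes M :: "'a::topological_space set \<Rightarrow> 'b::{real_inner, complete_space}"
    and e :: "nat \<Rightarrow> 'b"
  assumes total: "closure (span (range e)) = UNIV"
    and coord: "\<And>k B. B \<in> sets borel \<Longrightarrow> M B \<bullet> e k = \<mu> k B"
    and \<mu>: "\<And>k. borel_vector_measure (\<mu> k)"
    and tv: "total_variation M UNIV < \<infinity>"
  shows "borel_vector_measure M"
  unfolding borel_vector_measure_def
proof (intro allI impI)
  fix B :: "nat \<Rightarrow> 'a set"
  assume Bs: "range B \<subseteq> sets borel" and disj: "disjoint_family B"
  then have B: "\<And>j. B j \<in> sets borel" and U: "(\<Union>j. B j) \<in> sets borel"
    by auto
  have "summable (\<lambda>j. M (B j))"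
    using summable_norm_cancel_complete summable_norm_if_total_variation_finite[OF tv B disj] .
  then have sums: "(\<lambda>j. M (B j)) sums (\<Sum>j. M (B j))"
    by (rule summable_sums)
  have "((\<Sum>j. M (B j)) - M (\<Union>j. B j)) \<bullet> e k = 0" for k
  proof -
    have "(\<lambda>j. M (B j) \<bullet> e k) sums ((\<Sum>j. M (B j)) \<bullet> e k)"
      by (rule bounded_linear.sums[OF bounded_linear_inner_left sums])
    then have "(\<lambda>j. \<mu> k (B j)) sums ((\<Sum>j. M (B j)) \<bullet> e k)"
      by (simp add: coord B)
    moreover have "(\<lambda>j. \<mu> k (B j)) sums \<mu> k (\<Union>j. B j)"
      using \<mu> Bs disj unfolding borel_vector_measure_def by blast
    ultimately show ?thesis
      using sums_unique2 by (simp add: inner_diff_left coord U)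
  qed
  then show "(\<lambda>j. M (B j)) sums M (\<Union>j. B j)"
    using eq_0_if_orthogonal_to_total[OF total] sums by fastforce
qed

theorem lemma2p8:
  fixes e :: "nat \<Rightarrow> 'a::{real_inner, complete_space}"
    and \<mu> :: "nat \<Rightarrow> 'a set \<Rightarrow> real"
  assumes "orthonormal_basis e"
    and "\<And>k. borel_vector_measure (\<mu> k)"
    and "(SUP n. total_variation (\<lambda>B. \<Sum>k<n. \<mu> k B *\<^sub>R e k) UNIV) < \<infinity>"
  shows "\<exists>M :: 'a set \<Rightarrow> 'a.
           borel_vector_measure M \<and> total_variation M UNIV < \<infinity> \<and>
           total_variation M UNIV \<le> (SUP n. total_variation (\<lambda>B. \<Sum>k<n. \<mu> k B *\<^sub>R e k) UNIV) \<and>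
           (\<forall>k. \<forall>B \<in> sets borel. M B \<bullet> e k = \<mu> k B) \<and>
           (\<forall>B \<in> sets borel. (\<lambda>k. \<mu> k B *\<^sub>R e k) sums M B)"
proof -
  define C where "C = (SUP n. total_variation (\<lambda>B. \<Sum>k<n. \<mu> k B *\<^sub>R e k) UNIV)"
  define M where "M B = (\<Sum>k. \<mu> k B *\<^sub>R e k)" for B
  have orth: "\<And>i j. e i \<bullet> e j = (if i = j then 1 else 0)"
    and total: "closure (span (range e)) = UNIV"
    using assms(1) unfolding orthonormal_basis_def by auto
  have "summable (\<lambda>k. \<mu> k B *\<^sub>R e k)" if "B \<in> sets borel" for B
  proof (rule summable_orthonormal_if_bounded[OF orth])
    fix n
    have "ennreal (norm (\<Sum>k<n. \<mu> k B *\<^sub>R e k))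
        \<le> total_variation (\<lambda>B. \<Sum>k<n. \<mu> k B *\<^sub>R e k) UNIV"
      using norm_le_total_variation[OF that, of "\<lambda>B. \<Sum>k<n. \<mu> k B *\<^sub>R e k"] by simp
    also have "\<dots> \<le> C"
      unfolding C_def by (rule SUP_upper) simp
    finally show "norm (\<Sum>k<n. \<mu> k B *\<^sub>R e k) \<le> enn2real C"
      by (rule le_enn2real_if_ennreal_le) (use assms(3) C_def in simp_all)
  qed
  then have sums: "\<And>B. B \<in> sets borel \<Longrightarrow> (\<lambda>k. \<mu> k B *\<^sub>R e k) sums M B"
    unfolding M_def by (simp add: summable_sums)
  have coord: "\<And>k B. B \<in> sets borel \<Longrightarrow> M B \<bullet> e k = \<mu> k B"
    unfolding M_def using inner_suminf_orthonormal[OF orth] sums_summable[OF sums] by simp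
  have tv: "total_variation M UNIV \<le> C"
  proof (rule total_variation_le_if_tendsto)
    show "(\<lambda>n. \<Sum>k<n. \<mu> k B *\<^sub>R e k) \<longlonglongrightarrow> M B" if "B \<in> sets borel" for B
      using sums[OF that] unfolding sums_def .
    show "total_variation (\<lambda>B. \<Sum>k<n. \<mu> k B *\<^sub>R e k) UNIV \<le> C" for n
      unfolding C_def by (rule SUP_upper) simp
  qed
  have tv_finite: "total_variation M UNIV < \<infinity>"
    using tv assms(3) C_def by simp
  have "borel_vector_measure M"
    using total coord assms(2) tv_finite by (rule borel_vector_measure_if_coordinates)
  then show ?thesis
    using tv tv_finite coord sums unfolding C_def by (intro exI[of _ M]) simp
qed

end
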